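(* Let $r\ge2$ and let $(H_n)$ be a sequence of ordered $r$-matchings with $|H_n|\le \frac{1}{2r}\left(\frac{n}{\log n}\right)^{1/r}$. Then a.a.s. $\mathbb{RM}^{(r)}_{n}$ contains a sub-matching order-isomorphic to $H_n$.
   Context: An ordered $r$-matching of size $n$ is a set of $n$ pairwise disjoint $r$-element subsets (edges) of a linearly ordered vertex set of size $rn$; $|H|$ denotes the number of edges of $H$; $\mathbb{RM}^{(r)}_n$ is an ordered $r$-matching on $[rn]$ chosen uniformly at random. A copy of $H$ in $M$ is a set of edges of $M$ which, with the order induced on their union, is order-isomorphic to $H$. "A.a.s." means with probability tending to 1 as $n\to\infty$. *)

theory Defs
  imports Complex_Main
begin

definition perfect_r_matching :: "nat \<Rightarrow> nat set \<Rightarrow> nat set set \<Rightarrow> bool" where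
  "perfect_r_matching r V M \<longleftrightarrow>
     (\<forall>e\<in>M. e \<subseteq> V \<and> card e = r) \<and>
     (\<forall>e\<in>M. \<forall>e'\<in>M. e \<noteq> e' \<longrightarrow> e \<inter> e' = {}) \<and>
     \<Union>M = V"

definition ordered_matching :: "nat \<Rightarrow> nat \<Rightarrow> nat set set \<Rightarrow> bool" where
  "ordered_matching r n M \<longleftrightarrow> perfect_r_matching r {0..<r*n} M"

definition ordered_matchings :: "nat \<Rightarrow> nat \<Rightarrow> nat set set set" where
  "ordered_matchings r n = {M. ordered_matching r n M}"

definition contains_copy :: "nat set set \<Rightarrow> nat set set \<Rightarrow> bool" where
  "contains_copy M H \<longleftrightarrow>
     (\<exists>S\<subseteq>M. \<exists>f::nat \<Rightarrow> nat. strict_mono_on (\<Union>H) f \<and> f ` (\<Union>H) = \<Union>S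
        \<and> (\<lambda>e. f ` e) ` H = S)"

definition prob_contains_copy :: "nat \<Rightarrow> nat \<Rightarrow> nat set set \<Rightarrow> real" where
  "prob_contains_copy r n H =
     real (card {M \<in> ordered_matchings r n. contains_copy M H}) / real (card (ordered_matchings r n))"

end

theory Submission
  imports Defs "HOL-Library.FuncSet" "HOL-Library.Disjoint_Sets"
begin

text \<open>Let k = |H| and cut [0, rn) into rk consecutive blocks of length m = floor(n/k), one
  for each vertex of H. If for every edge h of H the random matching has an edge meeting each of
  the r blocks of h exactly once, then sending every vertex of H to the vertex of that edge in
  its block is an order embedding of H. For a fixed h, reveal t ~ m/(2r) times the matching edge
  through an uncovered vertex of the first block of h: while every block still has a ~ m/2
  uncovered vertices, a fraction at least (a/rn)^(r-1) of the candidate edges is good, so the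
  matchings without a good edge form a fraction at most exp(-t (a/rn)^(r-1)). A union bound over
  the k edges of H bounds the failure probability by k exp(-t (a/rn)^(r-1)), which is at most
  n^(-1/4) when |H|^r (2r)^r ln n <= n.\<close>

section \<open>Counting perfect matchings\<close>

definition perfect_matchings :: "nat \<Rightarrow> nat set \<Rightarrow> nat set set set" where
  "perfect_matchings r V = {M. perfect_r_matching r V M}"

definition edges_through :: "nat \<Rightarrow> nat set \<Rightarrow> nat \<Rightarrow> nat set set" where
  "edges_through r V v = {e. v \<in> e \<and> e \<subseteq> V \<and> card e = r}"

definition matchings_avoiding :: "nat \<Rightarrow> nat set set \<Rightarrow> nat set \<Rightarrow> nat set set set" where
  "matchings_avoiding r G V = {M \<in> perfect_matchings r V. M \<inter> G = {}}"

lemma finite_perfect_matchings: "finite V \<Longrightarrow> finite (perfect_matchings r V)"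
  by (rule finite_subset[of _ "Pow (Pow V)"])
     (auto simp: perfect_matchings_def perfect_r_matching_def)

lemma finite_matchings_avoiding: "finite V \<Longrightarrow> finite (matchings_avoiding r G V)"
  unfolding matchings_avoiding_def using finite_perfect_matchings by auto

lemma finite_edges_through: "finite V \<Longrightarrow> finite (edges_through r V v)"
  unfolding edges_through_def by (rule finite_subset[of _ "Pow V"]) auto

lemma matchings_avoiding_empty: "matchings_avoiding r {} V = perfect_matchings r V"
  unfolding matchings_avoiding_def by auto

lemma perfect_matchings_empty:
  assumes "r \<ge> 1" shows "perfect_matchings r {} = {{}}"
  using assms by (auto simp: perfect_matchings_def perfect_r_matching_def)

lemma perfect_r_matching_insert:
  assumes "perfect_r_matching r (V - e) M" "e \<subseteq> V" "card e = r"
  shows "perfect_r_matching r V (insert e M)"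
  unfolding perfect_r_matching_def
proof (intro conjI)
  show "\<forall>x\<in>insert e M. x \<subseteq> V \<and> card x = r"
    using assms unfolding perfect_r_matching_def by auto
  show "\<forall>x\<in>insert e M. \<forall>y\<in>insert e M. x \<noteq> y \<longrightarrow> x \<inter> y = {}"
    using assms(1) unfolding perfect_r_matching_def by fastforce
  show "\<Union>(insert e M) = V"
    using assms unfolding perfect_r_matching_def by auto
qed

lemma perfect_r_matching_remove:
  assumes "perfect_r_matching r V M" "e \<in> M"
  shows "perfect_r_matching r (V - e) (M - {e})"
  unfolding perfect_r_matching_def
proof (intro conjI)
  show "\<forall>x\<in>M - {e}. x \<subseteq> V - e \<and> card x = r"
  proof
    fix x assume "x \<in> M - {e}"
    then have "x \<inter> e = {}" "x \<subseteq> V" "card x = r"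
      using assms unfolding perfect_r_matching_def by auto
    then show "x \<subseteq> V - e \<and> card x = r" by blast
  qed
  show "\<forall>x\<in>M - {e}. \<forall>y\<in>M - {e}. x \<noteq> y \<longrightarrow> x \<inter> y = {}"
    using assms(1) unfolding perfect_r_matching_def by auto
  have "\<Union>M = V" "\<forall>x\<in>M. x \<noteq> e \<longrightarrow> x \<inter> e = {}"
    using assms unfolding perfect_r_matching_def by auto
  then show "\<Union>(M - {e}) = V - e" using assms(2) by blast
qed

lemma matchings_avoiding_eq_UN:
  assumes "v \<in> V"
  shows "matchings_avoiding r G V =
           (\<Union>e \<in> edges_through r V v - G. insert e ` matchings_avoiding r G (V - e))"
proof (intro equalityI subsetI)
  fix M assume "M \<in> matchings_avoiding r G V"
  then have M: "perfect_r_matching r V M" "M \<inter> G = {}"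
    by (auto simp: matchings_avoiding_def perfect_matchings_def)
  then obtain e where e: "e \<in> M" "v \<in> e"
    using assms unfolding perfect_r_matching_def by auto
  have "e \<in> edges_through r V v - G"
    using e M unfolding edges_through_def perfect_r_matching_def by auto
  moreover have "M - {e} \<in> matchings_avoiding r G (V - e)"
    using perfect_r_matching_remove[OF M(1) e(1)] M(2)
    by (auto simp: matchings_avoiding_def perfect_matchings_def)
  moreover have "M = insert e (M - {e})" using e by auto
  ultimately show "M \<in> (\<Union>e \<in> edges_through r V v - G. insert e ` matchings_avoiding r G (V - e))"
    by blast
next
  fix M assume "M \<in> (\<Union>e \<in> edges_through r V v - G. insert e ` matchings_avoiding r G (V - e))"
  then obtain e M' where e: "e \<in> edges_through r V v" "e \<notin> G" and "M = insert e M'"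
    and M': "perfect_r_matching r (V - e) M'" "M' \<inter> G = {}"
    by (auto simp: matchings_avoiding_def perfect_matchings_def)
  moreover have "perfect_r_matching r V (insert e M')"
    using perfect_r_matching_insert[OF M'(1)] e(1) unfolding edges_through_def by auto
  ultimately show "M \<in> matchings_avoiding r G V"
    by (auto simp: matchings_avoiding_def perfect_matchings_def)
qed

lemma card_matchings_avoiding_rec:
  assumes "v \<in> V" "finite V"
  shows "card (matchings_avoiding r G V) =
           (\<Sum>e \<in> edges_through r V v - G. card (matchings_avoiding r G (V - e)))"
proof -
  have edge_subset: "e' \<subseteq> V - e" if "M \<in> matchings_avoiding r G (V - e)" "e' \<in> M" for e e' M
    using that by (auto simp: matchings_avoiding_def perfect_matchings_def perfect_r_matching_def)
  have "card (matchings_avoiding r G V) =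
          (\<Sum>e \<in> edges_through r V v - G. card (insert e ` matchings_avoiding r G (V - e)))"
    unfolding matchings_avoiding_eq_UN[OF assms(1)]
  proof (rule card_UN_disjoint)
    show "finite (edges_through r V v - G)"
      using finite_edges_through[OF assms(2)] by simp
    show "\<forall>e\<in>edges_through r V v - G. finite (insert e ` matchings_avoiding r G (V - e))"
      using finite_matchings_avoiding assms(2) by blast
    show "\<forall>e\<in>edges_through r V v - G. \<forall>e'\<in>edges_through r V v - G. e \<noteq> e' \<longrightarrow>
            insert e ` matchings_avoiding r G (V - e)
              \<inter> insert e' ` matchings_avoiding r G (V - e') = {}"
    proof (intro ballI impI equals0I)
      fix e e' M assume e: "e \<in> edges_through r V v - G" "e' \<in> edges_through r V v - G" "e \<noteq> e'"
        and "M \<in> insert e ` matchings_avoiding r G (V - e)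
                   \<inter> insert e' ` matchings_avoiding r G (V - e')"
      then obtain M' where "M' \<in> matchings_avoiding r G (V - e')" "e \<in> M'" by auto
      then have "e \<subseteq> V - e'" by (rule edge_subset)
      then show False using e unfolding edges_through_def by auto
    qed
  qed
  also have "\<dots> = (\<Sum>e \<in> edges_through r V v - G. card (matchings_avoiding r G (V - e)))"
  proof (intro sum.cong refl card_image inj_onI)
    fix e M M' assume "e \<in> edges_through r V v - G" "insert e M = insert e M'"
      and "M \<in> matchings_avoiding r G (V - e)" "M' \<in> matchings_avoiding r G (V - e)"
    moreover from this have "e \<notin> M" "e \<notin> M'"
      using edge_subset unfolding edges_through_def by blast+
    ultimately show "M = M'" by (metis insert_ident)
  qed
  finally show ?thesis .
qed

lemma card_edges_through:
  assumes "finite V" "v \<in> V" "r \<ge> 1"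
  shows "card (edges_through r V v) = (card V - 1) choose (r - 1)"
proof -
  have "edges_through r V v = insert v ` {A. A \<subseteq> V - {v} \<and> card A = r - 1}"
  proof (intro equalityI subsetI)
    fix e assume e: "e \<in> edges_through r V v"
    then have "finite e" using assms(1) finite_subset unfolding edges_through_def by auto
    with e have "e = insert v (e - {v})" "e - {v} \<in> {A. A \<subseteq> V - {v} \<and> card A = r - 1}"
      unfolding edges_through_def by auto
    then show "e \<in> insert v ` {A. A \<subseteq> V - {v} \<and> card A = r - 1}" by blast
  next
    fix e assume "e \<in> insert v ` {A. A \<subseteq> V - {v} \<and> card A = r - 1}"
    then obtain A where "e = insert v A" "A \<subseteq> V - {v}" "card A = r - 1" by blast
    moreover have "finite A" "v \<notin> A" using \<open>A \<subseteq> V - {v}\<close> assms(1) finite_subset by auto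
    ultimately show "e \<in> edges_through r V v"
      using assms unfolding edges_through_def by auto
  qed
  also have "card \<dots> = card {A. A \<subseteq> V - {v} \<and> card A = r - 1}"
    by (rule card_image) (auto intro!: inj_onI simp: insert_ident)
  also have "\<dots> = (card V - 1) choose (r - 1)"
    using assms by (simp add: n_subsets)
  finally show ?thesis .
qed

text \<open>In a set of N + 1 vertices, the other r - 1 vertices of the edge through a fixed vertex
  are chosen among the remaining N.\<close>
fun perfect_matching_count :: "nat \<Rightarrow> nat \<Rightarrow> nat" where
  "perfect_matching_count r 0 = 1"
| "perfect_matching_count r (Suc N) = (N choose (r - 1)) * perfect_matching_count r (N - (r - 1))"

lemma card_perfect_matchings:
  assumes "r \<ge> 1" "finite V"
  shows "card (perfect_matchings r V) = perfect_matching_count r (card V)"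
  using assms(2)
proof (induction "card V" arbitrary: V rule: less_induct)
  case less
  show ?case
  proof (cases "V = {}")
    case True
    then show ?thesis using perfect_matchings_empty[OF assms(1)] by simp
  next
    case False
    then obtain v where v: "v \<in> V" by auto
    then obtain N where N: "card V = Suc N" using less.prems by (cases "card V") auto
    have "card (perfect_matchings r V)
            = (\<Sum>e \<in> edges_through r V v. card (perfect_matchings r (V - e)))"
      using card_matchings_avoiding_rec[OF v less.prems, of r "{}"]
      by (simp add: matchings_avoiding_empty)
    also have "\<dots> = (\<Sum>e \<in> edges_through r V v. perfect_matching_count r (N - (r - 1)))"
    proof (rule sum.cong[OF refl])
      fix e assume "e \<in> edges_through r V v"
      then have "e \<subseteq> V" "card e = r" "finite e"
        using less.prems finite_subset unfolding edges_through_def by auto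
      then have "card (V - e) = N - (r - 1)" using N assms(1) by (simp add: card_Diff_subset)
      then show "card (perfect_matchings r (V - e)) = perfect_matching_count r (N - (r - 1))"
        using less.hyps[of "V - e"] less.prems N by simp
    qed
    also have "\<dots> = perfect_matching_count r (card V)"
      using card_edges_through[OF less.prems v assms(1)] N by simp
    finally show ?thesis .
  qed
qed

lemma perfect_matching_count_pos:
  assumes "r \<ge> 1" shows "perfect_matching_count r (r * n) > 0"
proof (induction n)
  case (Suc n)
  have "r * Suc n = Suc (r * n + (r - 1))" using assms by simp
  then have "perfect_matching_count r (r * Suc n) =
               ((r * n + (r - 1)) choose (r - 1)) * perfect_matching_count r (r * n)"
    by (simp only: perfect_matching_count.simps diff_add_inverse2)
  then show ?case using Suc by (simp add: zero_less_binomial)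
qed simp

section \<open>Matchings avoiding the transversal edges\<close>

definition transversals :: "('i \<Rightarrow> 'a set) \<Rightarrow> 'i set \<Rightarrow> 'a set set" where
  "transversals J P = {e. e \<subseteq> \<Union>(J ` P) \<and> (\<forall>p\<in>P. card (e \<inter> J p) = 1)}"

lemma card_transversals_through_ge:
  assumes "finite P" "card P = r" "p0 \<in> P" "disjoint_family_on J P"
    and "v \<in> J p0" "v \<in> V" "finite V" "\<forall>p\<in>P. a \<le> card (J p \<inter> V)"
  shows "a ^ (r - 1) \<le> card (edges_through r V v \<inter> transversals J P)"
proof -
  define Q where "Q = P - {p0}"
  define D where "D = (\<Pi>\<^sub>E p \<in> Q. J p \<inter> V)"
  define extend where "extend g p = (if p = p0 then v else g p)" for g p
  define \<phi> where "\<phi> g = extend g ` P" for g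
  have same_block: "p = q" if "x \<in> J p" "x \<in> J q" "p \<in> P" "q \<in> P" for x p q
    using that assms(4) unfolding disjoint_family_on_def by blast
  have extend_in: "extend g p \<in> J p \<inter> V" if "g \<in> D" "p \<in> P" for g p
    using that assms(5,6) unfolding extend_def D_def Q_def by auto
  have trace: "\<phi> g \<inter> J p = {extend g p}" if "g \<in> D" "p \<in> P" for g p
    using that extend_in same_block unfolding \<phi>_def by blast
  have "\<phi> ` D \<subseteq> edges_through r V v \<inter> transversals J P"
  proof
    fix e assume "e \<in> \<phi> ` D"
    then obtain g where g: "g \<in> D" and e: "e = \<phi> g" by auto
    have "inj_on (extend g) P"
      using extend_in[OF g] same_block by (intro inj_onI) (metis IntD1)
    then have "card e = r" using assms(2) unfolding e \<phi>_def by (simp add: card_image)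
    moreover have "v \<in> e" "e \<subseteq> V" "e \<subseteq> \<Union>(J ` P)"
      using extend_in[OF g] assms(3) unfolding e \<phi>_def extend_def by force+
    ultimately show "e \<in> edges_through r V v \<inter> transversals J P"
      using trace[OF g] unfolding e edges_through_def transversals_def by auto
  qed
  moreover have "inj_on \<phi> D"
  proof (rule inj_onI)
    fix g g' assume g: "g \<in> D" and g': "g' \<in> D" and "\<phi> g = \<phi> g'"
    then have "{g q} = {g' q}" if "q \<in> Q" for q
      using trace[OF g, of q] trace[OF g', of q] that unfolding Q_def extend_def by auto
    then show "g = g'"
      using g g' unfolding D_def by (intro PiE_ext) auto
  qed
  ultimately have "card D \<le> card (edges_through r V v \<inter> transversals J P)"
    using finite_edges_through[OF assms(7)] by (metis card_image card_mono finite_Int)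
  moreover have "a ^ (r - 1) \<le> card D"
  proof -
    have "a ^ (r - 1) = (\<Prod>p\<in>Q. a)" using assms(1-3) unfolding Q_def by simp
    also have "\<dots> \<le> (\<Prod>p\<in>Q. card (J p \<inter> V))"
      using assms(8) unfolding Q_def by (intro prod_mono) auto
    also have "\<dots> = card D" using assms(1) unfolding D_def Q_def by (simp add: card_PiE)
    finally show ?thesis .
  qed
  ultimately show ?thesis by linarith
qed

lemma diff_le_mult_exp_neg_div:
  fixes c g b y :: real
  assumes "0 \<le> c" "c \<le> y" "0 \<le> b" "b \<le> g"
  shows "c - g \<le> c * exp (- (b / y))"
proof -
  have "c * (b / y) \<le> b"
    using assms by (cases "y = 0") (auto simp: field_simps mult_left_mono)
  then have "c - g \<le> c * (1 - b / y)" using assms(4) by (simp add: algebra_simps)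
  also have "\<dots> \<le> c * exp (- (b / y))"
    using exp_ge_add_one_self[of "- (b / y)"] assms(1) by (intro mult_left_mono) auto
  finally show ?thesis .
qed

lemma card_Diff_ge:
  assumes "finite e" "card e \<le> r" "b + r \<le> card A"
  shows "b \<le> card (A - e)"
  using diff_card_le_card_Diff[OF assms(1), of A] assms(2,3) by linarith

lemma blocks_large_Diff_edge:
  assumes "e \<in> edges_through r V v" "finite V" "\<forall>p\<in>P. a + r * Suc t \<le> card (J p \<inter> V)"
  shows "\<forall>p\<in>P. a + r * t \<le> card (J p \<inter> (V - e))"
proof
  fix p assume "p \<in> P"
  have "finite e" "card e = r"
    using assms(1,2) finite_subset unfolding edges_through_def by auto
  moreover have "a + r * Suc t \<le> card (J p \<inter> V)" using assms(3) \<open>p \<in> P\<close> by blast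
  then have "a + r * t + r \<le> card (J p \<inter> V)" by (simp add: algebra_simps)
  ultimately have "a + r * t \<le> card (J p \<inter> V - e)"
    using card_Diff_ge[of e r "a + r * t" "J p \<inter> V"] by simp
  then show "a + r * t \<le> card (J p \<inter> (V - e))" by (simp add: Int_Diff)
qed

lemma binomial_le_power_of_less:
  assumes "N < R" shows "N choose k \<le> R ^ k"
proof -
  have "N choose k \<le> (N choose k) * fact k" by simp
  also have "\<dots> \<le> N ^ k" by (rule binomial_fact_pow)
  also have "\<dots> \<le> R ^ k" using assms by (simp add: power_mono)
  finally show ?thesis .
qed

lemma card_edges_through_diff_transversals_le:
  assumes "r \<ge> 1" "finite P" "card P = r" "p0 \<in> P" "disjoint_family_on J P"
    and "v \<in> J p0" "v \<in> V" "finite V" "card V \<le> R" "\<forall>p\<in>P. a \<le> card (J p \<inter> V)"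
  shows "real (card (edges_through r V v - transversals J P))
           \<le> real ((card V - 1) choose (r - 1)) * exp (- ((real a / real R) ^ (r - 1)))"
proof -
  let ?E = "edges_through r V v"
  let ?G = "transversals J P"
  define C where "C = (card V - 1) choose (r - 1)"
  have "a ^ (r - 1) \<le> card (?E \<inter> ?G)"
    by (rule card_transversals_through_ge[OF assms(2-8,10)])
  moreover have "card ?E = C" "finite ?E"
    using card_edges_through[OF assms(8,7,1)] finite_edges_through[OF assms(8)]
    unfolding C_def by auto
  then have "card (?E - ?G) = C - card (?E \<inter> ?G)" "card (?E \<inter> ?G) \<le> C"
    using card_mono[of ?E "?E \<inter> ?G"] by (auto simp: card_Diff_subset_Int)
  moreover have "real C \<le> real R ^ (r - 1)"
  proof -
    have "card V > 0" using assms(7,8) card_gt_0_iff by blast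
    then have "card V - 1 < R" using assms(9) by linarith
    then show ?thesis
      using binomial_le_power_of_less[of "card V - 1" R "r - 1"] unfolding C_def
      by (metis of_nat_le_iff of_nat_power)
  qed
  ultimately show ?thesis
    using diff_le_mult_exp_neg_div[of "real C" "real R ^ (r - 1)" "real a ^ (r - 1)"]
    unfolding C_def by (simp add: power_divide of_nat_diff)
qed

text \<open>Exposing the matching edge through a vertex of the first block, at least a fraction
  (a/R)^(r-1) of the possible edges are transversal; removing an edge costs each block at most
  r vertices, so t such rounds are available.\<close>
lemma card_matchings_avoiding_transversals_le:
  assumes "r \<ge> 1" "finite P" "card P = r" "disjoint_family_on J P"
  shows "finite V \<Longrightarrow> card V \<le> R \<Longrightarrow> \<forall>p\<in>P. a + r * t \<le> card (J p \<inter> V) \<Longrightarrow>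
    real (card (matchings_avoiding r (transversals J P) V))
      \<le> exp (- real t * (real a / real R) ^ (r - 1)) * real (perfect_matching_count r (card V))"
proof (induction t arbitrary: V)
  case 0
  have "card (matchings_avoiding r (transversals J P) V) \<le> card (perfect_matchings r V)"
    using finite_perfect_matchings[OF "0.prems"(1)]
    by (intro card_mono) (auto simp: matchings_avoiding_def)
  then show ?case using card_perfect_matchings[OF assms(1) "0.prems"(1)] by simp
next
  case (Suc t)
  let ?G = "transversals J P"
  define x where "x = (real a / real R) ^ (r - 1)"
  have "P \<noteq> {}" using assms(1-3) by auto
  then obtain p0 where p0: "p0 \<in> P" by blast
  have "a + r * Suc t \<le> card (J p0 \<inter> V)" using Suc.prems(3) p0 by blast
  then have "J p0 \<inter> V \<noteq> {}" using assms(1) by auto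
  then obtain v where v: "v \<in> J p0" "v \<in> V" by blast
  then obtain N where N: "card V = Suc N" using Suc.prems(1) by (cases "card V") auto
  let ?E = "edges_through r V v"
  define C where "C = N choose (r - 1)"
  have step: "real (card (matchings_avoiding r ?G (V - e)))
      \<le> exp (- (real t * x)) * real (perfect_matching_count r (N - (r - 1)))"
    if e: "e \<in> ?E" for e
  proof -
    have e_sub: "e \<subseteq> V" "card e = r" "finite e"
      using e Suc.prems(1) finite_subset unfolding edges_through_def by auto
    have "\<forall>p\<in>P. a + r * t \<le> card (J p \<inter> (V - e))"
      using blocks_large_Diff_edge[OF e Suc.prems(1,3)] .
    moreover have "card (V - e) = N - (r - 1)"
      using e_sub N assms(1) by (simp add: card_Diff_subset)
    moreover have "finite (V - e)" "card (V - e) \<le> R"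
      using Suc.prems(1,2) N \<open>card (V - e) = N - (r - 1)\<close> by auto
    ultimately show ?thesis
      using Suc.IH[of "V - e"] unfolding x_def by simp
  qed
  have "\<forall>p\<in>P. a \<le> card (J p \<inter> V)"
    using Suc.prems(3) by (meson le_add1 le_trans)
  then have bad_edges: "real (card (?E - ?G)) \<le> real C * exp (- x)"
    using card_edges_through_diff_transversals_le[OF assms(1-3) p0 assms(4) v Suc.prems(1,2)] N
    unfolding C_def x_def by simp
  have "real (card (matchings_avoiding r ?G V))
          = (\<Sum>e \<in> ?E - ?G. real (card (matchings_avoiding r ?G (V - e))))"
    using card_matchings_avoiding_rec[OF v(2) Suc.prems(1)] by simp
  also have "\<dots> \<le> real (card (?E - ?G))
                    * (exp (- (real t * x)) * real (perfect_matching_count r (N - (r - 1))))"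
    using sum_mono[of "?E - ?G", OF step] by simp
  also have "\<dots> \<le> real C * exp (- x)
                    * (exp (- (real t * x)) * real (perfect_matching_count r (N - (r - 1))))"
    using bad_edges by (intro mult_right_mono) auto
  also have "\<dots> = exp (- real (Suc t) * x) * real (perfect_matching_count r (card V))"
    unfolding N C_def by (simp add: algebra_simps flip: exp_add)
  finally show ?case unfolding x_def .
qed

section \<open>Blocks and embeddings\<close>

definition block :: "nat \<Rightarrow> nat \<Rightarrow> nat set" where
  "block m p = {p * m..<(p + 1) * m}"

lemma card_block [simp]: "card (block m p) = m"
  unfolding block_def by simp

lemma block_less:
  assumes "x \<in> block m p" "y \<in> block m q" "p < q"
  shows "x < y"
proof -
  have "(p + 1) * m \<le> q * m" using assms(3) by (intro mult_le_mono1) simp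
  then show ?thesis using assms(1,2) unfolding block_def by simp
qed

lemma block_disjoint: "p \<noteq> q \<Longrightarrow> block m p \<inter> block m q = {}"
  by (metis disjoint_iff block_less less_irrefl linorder_neqE_nat)

lemma disjoint_family_on_block: "disjoint_family_on (block m) P"
  unfolding disjoint_family_on_def using block_disjoint by blast

lemma UN_transversals_Int_block:
  assumes "disjoint H" "\<And>h. h \<in> H \<Longrightarrow> es h \<in> transversals (block m) h" "h \<in> H" "x \<in> h"
  shows "(\<Union>h'\<in>H. es h') \<inter> block m x = es h \<inter> block m x"
proof -
  have "es h' \<inter> block m x = {}" if "h' \<in> H" "h' \<noteq> h" for h'
  proof -
    have "x \<notin> h'" using assms(1,3,4) that unfolding pairwise_def disjnt_def by blast
    moreover have "es h' \<subseteq> \<Union>(block m ` h')"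
      using assms(2)[OF \<open>h' \<in> H\<close>] unfolding transversals_def by blast
    moreover have "\<forall>p\<in>h'. block m p \<inter> block m x = {}"
      using \<open>x \<notin> h'\<close> block_disjoint by metis
    ultimately show ?thesis by blast
  qed
  then show ?thesis using assms(3) by blast
qed

lemma block_subset_atLeastLessThan:
  assumes "p < r * k" "k * m \<le> n"
  shows "block m p \<subseteq> {0..<r * n}"
proof -
  have "(p + 1) * m \<le> r * k * m" using assms(1) by (intro mult_le_mono1) auto
  also have "\<dots> \<le> r * n" using assms(2) by (simp add: mult.assoc)
  finally show ?thesis unfolding block_def by auto
qed

text \<open>Choosing in each block the vertex of the transversal edge defines an order embedding
  of H into M, since the blocks are ordered like the vertices of H.\<close>
lemma contains_copy_if_transversals:
  assumes "disjoint H" and transversal: "\<forall>h\<in>H. \<exists>e\<in>M. e \<in> transversals (block m) h"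
  shows "contains_copy M H"
proof -
  have "\<forall>h\<in>H. \<exists>e. e \<in> M \<and> e \<in> transversals (block m) h"
    using transversal by blast
  from bchoice[OF this] obtain es
    where es: "\<And>h. h \<in> H \<Longrightarrow> es h \<in> M \<and> es h \<in> transversals (block m) h"
    by blast
  then have es_transversal: "\<And>h. h \<in> H \<Longrightarrow> es h \<in> transversals (block m) h" by blast
  define f where "f x = the_elem ((\<Union>h\<in>H. es h) \<inter> block m x)" for x
  have f_eq: "es h \<inter> block m x = {f x}" if "h \<in> H" "x \<in> h" for h x
  proof -
    have "card (es h \<inter> block m x) = 1"
      using es[OF that(1)] that(2) unfolding transversals_def by blast
    then obtain y where "es h \<inter> block m x = {y}" by (rule card_1_singletonE)
    then show ?thesis
      using UN_transversals_Int_block[OF assms(1) es_transversal that] unfolding f_def by simp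
  qed
  have f_block: "f x \<in> block m x" if "x \<in> \<Union>H" for x
    using f_eq that by blast
  have "strict_mono_on (\<Union>H) f"
    by (intro strict_mono_onI block_less[OF f_block f_block])
  moreover have f_image: "f ` h = es h" if h: "h \<in> H" for h
  proof
    show "f ` h \<subseteq> es h" using f_eq[OF h] by blast
    show "es h \<subseteq> f ` h"
    proof
      fix y assume "y \<in> es h"
      moreover from this obtain p where "p \<in> h" "y \<in> block m p"
        using es[OF h] unfolding transversals_def by blast
      ultimately show "y \<in> f ` h" using f_eq[OF h] by blast
    qed
  qed
  then have "(\<lambda>e. f ` e) ` H = es ` H" by simp
  moreover have "f ` \<Union>H = \<Union>(es ` H)" using f_image by (simp add: image_Union)
  moreover have "es ` H \<subseteq> M" using es by blast
  ultimately show ?thesis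
    unfolding contains_copy_def by blast
qed

lemma card_ordered_matching:
  assumes "ordered_matching r k H" "r \<ge> 1"
  shows "card H = k"
proof -
  have H: "perfect_r_matching r {0..<r * k} H"
    using assms(1) unfolding ordered_matching_def .
  have "r * k = card (\<Union>H)" using H unfolding perfect_r_matching_def by simp
  also have "\<dots> = sum card H"
  proof (rule card_Union_disjoint)
    show "pairwise disjnt H"
      using H unfolding perfect_r_matching_def pairwise_def disjnt_def by auto
    show "\<And>e. e \<in> H \<Longrightarrow> finite e"
      using H unfolding perfect_r_matching_def by (meson finite_atLeastLessThan finite_subset)
  qed
  also have "\<dots> = card H * r" using H unfolding perfect_r_matching_def by simp
  finally show ?thesis using assms(2) by simp
qed

lemma card_no_copy_le:
  assumes "r \<ge> 1" "ordered_matching r k H" "k * m \<le> n" "a + r * t \<le> m"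
  shows "real (card {M \<in> ordered_matchings r n. \<not> contains_copy M H})
           \<le> real k * exp (- real t * (real a / real (r * n)) ^ (r - 1))
               * real (perfect_matching_count r (r * n))"
proof -
  define V where "V = {0..<r * n}"
  define Bad where "Bad h = matchings_avoiding r (transversals (block m) h) V" for h
  define B where "B = exp (- real t * (real a / real (r * n)) ^ (r - 1))
                        * real (perfect_matching_count r (r * n))"
  have H: "perfect_r_matching r {0..<r * k} H"
    using assms(2) unfolding ordered_matching_def .
  have "card H = k" using card_ordered_matching[OF assms(2,1)] .
  have "finite H"
    using H finite_subset[of H "Pow {0..<r * k}"] unfolding perfect_r_matching_def by auto
  have "disjoint H" using H unfolding perfect_r_matching_def pairwise_def disjnt_def by auto
  have "{M \<in> ordered_matchings r n. \<not> contains_copy M H} \<subseteq> (\<Union>h\<in>H. Bad h)"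
  proof (intro subsetI, elim CollectE conjE)
    fix M assume M: "M \<in> ordered_matchings r n" "\<not> contains_copy M H"
    then have "\<not> (\<forall>h\<in>H. \<exists>e\<in>M. e \<in> transversals (block m) h)"
      using contains_copy_if_transversals[OF \<open>disjoint H\<close>] by blast
    moreover have "M \<in> perfect_matchings r V"
      using M(1) unfolding ordered_matchings_def ordered_matching_def perfect_matchings_def V_def
      by simp
    ultimately show "M \<in> (\<Union>h\<in>H. Bad h)"
      unfolding Bad_def matchings_avoiding_def by blast
  qed
  then have "card {M \<in> ordered_matchings r n. \<not> contains_copy M H} \<le> card (\<Union>h\<in>H. Bad h)"
    using \<open>finite H\<close> finite_matchings_avoiding[of V] unfolding Bad_def V_def
    by (intro card_mono) auto
  also have "\<dots> \<le> (\<Sum>h\<in>H. card (Bad h))"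
    using \<open>finite H\<close> by (rule card_UN_le)
  finally have "real (card {M \<in> ordered_matchings r n. \<not> contains_copy M H})
                  \<le> (\<Sum>h\<in>H. real (card (Bad h)))"
    by (simp flip: of_nat_sum)
  also have "\<dots> \<le> (\<Sum>h\<in>H. B)"
  proof (rule sum_mono)
    fix h assume "h \<in> H"
    then have h: "finite h" "card h = r" "h \<subseteq> {0..<r * k}"
      using H finite_subset unfolding perfect_r_matching_def by auto
    have "block m p \<subseteq> V" if "p \<in> h" for p
    proof -
      have "p < r * k" using h(3) that by auto
      then show ?thesis unfolding V_def by (rule block_subset_atLeastLessThan[OF _ assms(3)])
    qed
    then have "\<forall>p\<in>h. a + r * t \<le> card (block m p \<inter> V)"
      using assms(4) by (simp add: Int_absorb2)
    then show "real (card (Bad h)) \<le> B"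
      using card_matchings_avoiding_transversals_le[OF assms(1) h(1,2) disjoint_family_on_block,
          of V "r * n" a t]
      unfolding Bad_def B_def V_def by simp
  qed
  also have "\<dots> = real k * B" using \<open>card H = k\<close> by simp
  finally show ?thesis unfolding B_def by (simp only: mult.assoc)
qed

section \<open>Numerical estimates\<close>

lemma size_bound_imp_power_bound:
  fixes x :: real and n r :: nat
  assumes "r \<ge> 1" "n \<ge> 2" "0 \<le> x"
    and "x \<le> 1 / (2 * real r) * (real n / ln (real n)) powr (1 / real r)"
  shows "(2 * real r * x) ^ r * ln (real n) \<le> real n"
proof -
  have ln_pos: "ln (real n) > 0" using assms(2) by simp
  have "2 * real r * x \<le> (real n / ln (real n)) powr (1 / real r)"
    using assms(1,4) by (simp add: field_simps)
  then have "(2 * real r * x) ^ r \<le> ((real n / ln (real n)) powr (1 / real r)) ^ r"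
    using assms(1,3) by (intro power_mono) auto
  also have "\<dots> = (real n / ln (real n)) powr (real r * (1 / real r))"
    by (rule powr_power) (use ln_pos assms(2) in simp)
  also have "\<dots> = real n / ln (real n)"
    using assms(1) ln_pos by simp
  finally show ?thesis using ln_pos by (simp add: pos_le_divide_eq)
qed

lemma three_quarters_le_power:
  fixes u :: real
  assumes "r \<ge> 1" "8 * real r ^ 2 \<le> u"
  shows "3 / 4 \<le> (1 - 2 * real r / u) ^ r"
proof -
  have "real r \<ge> 1" using assms(1) by simp
  then have "2 * real r \<le> 8 * real r ^ 2"
    using mult_right_mono[of 1 "4 * real r" "2 * real r"] by (simp add: power2_eq_square)
  then have "2 * real r \<le> u" "u > 0" using assms(2) \<open>real r \<ge> 1\<close> by linarith+
  then have "- 1 \<le> - (2 * real r / u)" by simp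
  then have "1 + real r * (- (2 * real r / u)) \<le> (1 + (- (2 * real r / u))) ^ r"
    by (rule Bernoulli_inequality)
  then have "1 - real r * (2 * real r / u) \<le> (1 - 2 * real r / u) ^ r" by simp
  moreover have "real r * (2 * real r / u) = 2 * real r ^ 2 / u"
    by (simp add: power2_eq_square)
  moreover have "2 * real r ^ 2 / u \<le> 1 / 4"
    using assms(2) \<open>u > 0\<close> by (simp add: divide_le_eq)
  ultimately show ?thesis by linarith
qed

lemma ln_le_power_div:
  fixes n k :: real
  assumes "r \<ge> 1" "k > 0" "n > 0" "(2 * real r * k) ^ r * ln n \<le> n"
  shows "ln n \<le> (n / k) ^ r / ((2 * real r) ^ r * n ^ (r - 1))"
proof -
  have "n ^ r = n * n ^ (r - 1)" using assms(1) by (simp flip: power_Suc)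
  then have "(n / k) ^ r / ((2 * real r) ^ r * n ^ (r - 1)) = n / (k ^ r * (2 * real r) ^ r)"
    using assms(2,3) by (simp add: power_divide)
  also have "\<dots> = n / (2 * real r * k) ^ r" by (simp add: power_mult_distrib mult.commute)
  finally show ?thesis
    using assms by (simp add: pos_le_divide_eq mult.commute[of "ln n"])
qed

text \<open>With u = n/k the exponent is at least ((u - 2r)/(2r))^r / n^(r-1), which is
  (1 - 2r/u)^r times n/(2rk)^r \<ge> ln n, and Bernoulli's inequality bounds the first
  factor by 3/4 once u \<ge> 8r^2.\<close>
lemma exponent_ge_three_quarters_ln:
  fixes n k m t a :: real and r :: nat
  assumes "r \<ge> 1" "k > 0" "n > 0" "ln n \<ge> 0"
    and "m \<ge> n / k - 1" "t \<ge> (m + 1) / (2 * real r) - 1" "a \<ge> m / 2"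
    and "(2 * real r * k) ^ r * ln n \<le> n" "8 * real r ^ 2 \<le> n / k"
  shows "3 / 4 * ln n \<le> t * (a / (real r * n)) ^ (r - 1)"
proof -
  define u where "u = n / k"
  define d where "d = u - 2 * real r"
  have "0 \<le> 2 * real r * (4 * real r - 1)" using assms(1) by simp
  then have "2 * real r \<le> 8 * real r ^ 2" by (simp add: power2_eq_square algebra_simps)
  then have u_pos: "u > 0" and "d \<ge> 0"
    using assms(1-3,9) unfolding u_def d_def by auto
  have "(m + 1) / (2 * real r) \<ge> u / (2 * real r)"
    using assms(5) unfolding u_def by (intro divide_right_mono) auto
  then have "t \<ge> d / (2 * real r)"
    using assms(1,6) unfolding d_def by (simp add: diff_divide_distrib)
  moreover have "0 \<le> d / (2 * real r)" using \<open>d \<ge> 0\<close> by simp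
  ultimately have "0 \<le> t" by linarith
  have "real r \<ge> 1" using assms(1) by simp
  then have "a \<ge> d / 2" using assms(5,7) unfolding d_def u_def by (simp add: field_simps)
  then have "d / (2 * real r * n) \<le> a / (real r * n)"
    using divide_right_mono[of "d / 2" a "real r * n"] assms(3) by (simp add: mult.assoc)
  then have "d / (2 * real r) * (d / (2 * real r * n)) ^ (r - 1) \<le> t * (a / (real r * n)) ^ (r - 1)"
    using \<open>d \<ge> 0\<close> \<open>t \<ge> d / (2 * real r)\<close> \<open>0 \<le> t\<close> assms(3)
    by (intro mult_mono power_mono) auto
  moreover have "d / (2 * real r) * (d / (2 * real r * n)) ^ (r - 1)
                   = d ^ r / ((2 * real r) ^ r * n ^ (r - 1))"
    using assms(1) by (cases r) (auto simp: power_divide power_mult_distrib)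
  ultimately have E: "d ^ r / ((2 * real r) ^ r * n ^ (r - 1)) \<le> t * (a / (real r * n)) ^ (r - 1)"
    by simp
  have "d ^ r = (1 - 2 * real r / u) ^ r * u ^ r"
    using u_pos unfolding d_def by (simp add: power_mult_distrib[symmetric] field_simps)
  moreover have "(1 - 2 * real r / u) ^ r \<ge> 3 / 4"
    using three_quarters_le_power[OF assms(1)] assms(9) unfolding u_def .
  moreover have "u ^ r / ((2 * real r) ^ r * n ^ (r - 1)) \<ge> ln n"
    using ln_le_power_div[OF assms(1-3,8)] unfolding u_def .
  ultimately have "3 / 4 * ln n
                     \<le> (1 - 2 * real r / u) ^ r * (u ^ r / ((2 * real r) ^ r * n ^ (r - 1)))"
    using assms(4) by (intro mult_mono) auto
  also have "\<dots> = d ^ r / ((2 * real r) ^ r * n ^ (r - 1))"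
    using \<open>d ^ r = (1 - 2 * real r / u) ^ r * u ^ r\<close> by simp
  finally show ?thesis using E by linarith
qed

lemma succ_div_minus_one_le_div:
  assumes "k > 0"
  shows "(real n + 1) / real k - 1 \<le> real (n div k)"
proof -
  have "n mod k < k" using assms by simp
  then have "n + 1 \<le> n div k * k + k" using div_mult_mod_eq[of n k] by linarith
  then have "real (n + 1) \<le> real (n div k * k + k)" by (simp only: of_nat_le_iff)
  then have "real n + 1 \<le> (real (n div k) + 1) * real k" by (simp add: algebra_simps)
  then have "(real n + 1) / real k \<le> real (n div k) + 1" using assms by (simp add: divide_le_eq)
  then show ?thesis by linarith
qed

lemma le_sqrt_of_power_bound:
  assumes "r \<ge> 2" "(2 * real r * real k) ^ r * ln (real n) \<le> real n" "ln (real n) \<ge> 1"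
  shows "real k \<le> sqrt (real n)"
proof (cases "k = 0")
  case False
  have "real k ^ 2 \<le> real k ^ r" using False assms(1) by (intro power_increasing) auto
  also have "\<dots> \<le> (2 * real r * real k) ^ r"
    using assms(1) mult_right_mono[of 1 "2 * real r" "real k"] by (intro power_mono) auto
  also have "\<dots> \<le> (2 * real r * real k) ^ r * ln (real n)"
    using mult_left_mono[OF assms(3), of "(2 * real r * real k) ^ r"] by simp
  also have "\<dots> \<le> real n" by (rule assms(2))
  finally show ?thesis by (simp add: real_le_rsqrt)
qed simp

lemma round_count_bounds:
  fixes m r t a :: nat
  assumes "r \<ge> 1" "t = m div (2 * r)" "a = m - r * t"
  shows "a + r * t = m" "(real m + 1) / (2 * real r) - 1 \<le> real t" "real m / 2 \<le> real a"
proof -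
  have "t * (2 * r) \<le> m" unfolding assms(2) by (rule div_times_less_eq_dividend)
  then have "2 * (r * t) \<le> m" by (simp add: algebra_simps)
  then show "a + r * t = m" using assms(3) by simp
  have "2 * real (r * t) \<le> real m"
    using \<open>2 * (r * t) \<le> m\<close> by (simp only: of_nat_le_iff flip: of_nat_mult)
  moreover have "real a = real m - real (r * t)"
    using assms(3) \<open>2 * (r * t) \<le> m\<close> by (simp add: of_nat_diff)
  ultimately show "real m / 2 \<le> real a" by linarith
  show "(real m + 1) / (2 * real r) - 1 \<le> real t"
    using succ_div_minus_one_le_div[of "2 * r" m] assms(1,2) by simp
qed

lemma failure_bound_le_powr:
  fixes n k r m t a :: nat
  assumes "r \<ge> 2" "(2 * real r * real k) ^ r * ln (real n) \<le> real n" "64 * r ^ 4 \<le> n"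
    and "m = n div k" "t = m div (2 * r)" "a = m - r * t"
  shows "real k * exp (- real t * (real a / real (r * n)) ^ (r - 1)) \<le> real n powr (- 1 / 4)"
proof (cases "k = 0")
  case False
  have "64 * 2 ^ 4 \<le> 64 * r ^ 4" using assms(1) by (intro mult_le_mono2 power_mono) auto
  then have "64 * 2 ^ 4 \<le> n" using assms(3) by (rule le_trans)
  then have n3: "real n \<ge> 3" by simp
  then have ln_ge: "ln (real n) \<ge> 1" using exp_le by (simp add: ln_ge_iff)
  have k_le: "real k \<le> sqrt (real n)" using le_sqrt_of_power_bound[OF assms(1,2) ln_ge] .
  have "64 * real r ^ 4 = (8 * real r ^ 2) ^ 2" by algebra
  then have "8 * real r ^ 2 = sqrt (64 * real r ^ 4)" by (simp only: real_sqrt_abs) simp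
  also have "\<dots> \<le> sqrt (real n)"
    using assms(3)
    by (metis of_nat_le_iff of_nat_mult of_nat_numeral of_nat_power real_sqrt_le_mono)
  also have "\<dots> \<le> real n / real k"
  proof -
    have "real k * sqrt (real n) \<le> sqrt (real n) * sqrt (real n)"
      using k_le by (intro mult_right_mono) auto
    then show ?thesis using False by (simp add: le_divide_eq mult.commute)
  qed
  finally have "8 * real r ^ 2 \<le> real n / real k" .
  moreover have "real n / real k - 1 \<le> real m"
    using succ_div_minus_one_le_div[of k n] divide_right_mono[of "real n" "real n + 1" "real k"]
      False assms(4) by simp
  ultimately have E: "3 / 4 * ln (real n) \<le> real t * (real a / (real r * real n)) ^ (r - 1)"
    using round_count_bounds[of r t m a] assms(1,2,5,6) ln_ge n3 False
    by (intro exponent_ge_three_quarters_ln) auto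
  have "real k * exp (- real t * (real a / real (r * n)) ^ (r - 1))
          \<le> sqrt (real n) * exp (- (3 / 4 * ln (real n)))"
    using k_le E by (intro mult_mono) auto
  also have "\<dots> = real n powr (1 / 2) * real n powr (- 3 / 4)"
  proof -
    have "exp (- (3 / 4 * ln (real n))) = real n powr (- 3 / 4)" using n3 by (simp add: powr_def)
    then show ?thesis by (simp add: powr_half_sqrt)
  qed
  also have "\<dots> = real n powr (- 1 / 4)" by (simp flip: powr_add)
  finally show ?thesis .
qed simp

lemma ordered_matchings_eq: "ordered_matchings r n = perfect_matchings r {0..<r * n}"
  unfolding ordered_matchings_def ordered_matching_def perfect_matchings_def ..

lemma prob_contains_copy_eq:
  assumes "r \<ge> 1"
  shows "prob_contains_copy r n H = 1 - real (card {M \<in> ordered_matchings r n. \<not> contains_copy M H})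
                                       / real (perfect_matching_count r (r * n))"
proof -
  let ?All = "ordered_matchings r n"
  have "finite ?All" unfolding ordered_matchings_eq by (simp add: finite_perfect_matchings)
  have card_All: "card ?All = perfect_matching_count r (r * n)"
    unfolding ordered_matchings_eq using assms by (simp add: card_perfect_matchings)
  have "{M \<in> ?All. contains_copy M H} = ?All - {M \<in> ?All. \<not> contains_copy M H}" by blast
  then have "real (card {M \<in> ?All. contains_copy M H})
               = real (card ?All) - real (card {M \<in> ?All. \<not> contains_copy M H})"
    using \<open>finite ?All\<close> by (simp add: card_Diff_subset of_nat_diff card_mono)
  then show ?thesis
    using perfect_matching_count_pos[OF assms, of n] card_All
    unfolding prob_contains_copy_def by (simp add: diff_divide_distrib)
qed

lemma prob_contains_copy_le_one: "r \<ge> 1 \<Longrightarrow> prob_contains_copy r n H \<le> 1"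
  by (simp add: prob_contains_copy_eq)

lemma prob_contains_copy_ge:
  assumes "r \<ge> 2" "ordered_matching r k H"
    and "(2 * real r * real k) ^ r * ln (real n) \<le> real n" "64 * r ^ 4 \<le> n"
  shows "1 - real n powr (- 1 / 4) \<le> prob_contains_copy r n H"
proof -
  define m where "m = n div k"
  define t where "t = m div (2 * r)"
  define a where "a = m - r * t"
  have "k * m \<le> n" unfolding m_def by simp
  moreover have "a + r * t \<le> m"
    using round_count_bounds(1)[of r t m a] assms(1) t_def a_def by simp
  ultimately have "real (card {M \<in> ordered_matchings r n. \<not> contains_copy M H})
                     / real (perfect_matching_count r (r * n))
                   \<le> real k * exp (- real t * (real a / real (r * n)) ^ (r - 1))"
    using card_no_copy_le[of r k H m n a t] assms(1,2) perfect_matching_count_pos[of r n]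
    by (simp add: divide_le_eq)
  also have "\<dots> \<le> real n powr (- 1 / 4)"
    using assms(1,3,4) m_def t_def a_def by (rule failure_bound_le_powr)
  finally show ?thesis using assms(1) by (simp add: prob_contains_copy_eq)
qed

theorem propositionA3:
  fixes r :: nat and H :: "nat \<Rightarrow> nat set set"
  assumes "r \<ge> 2"
    and "\<And>n. \<exists>k. ordered_matching r k (H n)"
    and "\<And>n. n \<ge> 2 \<Longrightarrow>
           real (card (H n)) \<le> 1 / (2 * real r) * (real n / ln (real n)) powr (1 / real r)"
  shows "(\<lambda>n. prob_contains_copy r n (H n)) \<longlonglongrightarrow> 1"
proof (rule tendsto_sandwich)
  show "\<forall>\<^sub>F n in sequentially. 1 - real n powr (- 1 / 4) \<le> prob_contains_copy r n (H n)"
  proof (rule eventually_sequentiallyI)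
    fix n assume n: "64 * r ^ 4 \<le> n"
    obtain k where k: "ordered_matching r k (H n)" using assms(2) by blast
    have "1 \<le> r ^ 4" using assms(1) by simp
    then have "2 \<le> n" using n by linarith
    then have "(2 * real r * real k) ^ r * ln (real n) \<le> real n"
      using assms(1,3) card_ordered_matching[OF k] by (intro size_bound_imp_power_bound) auto
    then show "1 - real n powr (- 1 / 4) \<le> prob_contains_copy r n (H n)"
      using assms(1) k n by (intro prob_contains_copy_ge)
  qed
  show "\<forall>\<^sub>F n in sequentially. prob_contains_copy r n (H n) \<le> 1"
    using assms(1) by (simp add: prob_contains_copy_le_one)
  have "(\<lambda>n. real n powr (- 1 / 4)) \<longlonglongrightarrow> 0"
    by (intro tendsto_neg_powr filterlim_real_sequentially) simp
  from tendsto_diff[OF tendsto_const this, of 1]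
  show "(\<lambda>n. 1 - real n powr (- 1 / 4)) \<longlonglongrightarrow> 1" by simp
qed (rule tendsto_const)

end
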